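(* Let $G$ act by isometries on a $\delta$-hyperbolic geodesic space $X$, let $\alpha\ge3\delta$ and let $U\subset G$ be $\alpha$-reduced at $p\in X$. Let $w\equiv u_1\cdots u_m$ and $w'\equiv u'_1\cdots u'_{m'}$ be elements of $\mathbf F(U)$ written in reduced form ($m\ge1$). If $(p,w'p)_{wp}\le\frac12|u_mp-p|$, then $w$ is a prefix of $w'$.
   Context: Hyperbolicity: $(x,z)_t\ge\min\{(x,y)_t,(y,z)_t\}-\delta$, $(x,y)_z=\frac12(|x-z|+|y-z|-|x-y|)$. $U$ finite is $\alpha$-reduced at $p$ if $U\cap U^{-1}=\varnothing$ and for distinct $u_1,u_2\in U\sqcup U^{-1}$, $(u_1p,u_2p)_p<\frac12\min\{|u_1p-p|,|u_2p-p|\}-\alpha-50\delta$. $\mathbf F(U)$ is the free group on $U$; its elements act on $X$ via their images in $G$. *)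

theory Defs
  imports "HOL-Analysis.Analysis" "HOL-Algebra.Group" "HOL-Library.Sublist"
begin

definition gromov :: "'x::metric_space \<Rightarrow> 'x \<Rightarrow> 'x \<Rightarrow> real" where
  "gromov x y z = (dist x z + dist y z - dist x y) / 2"

definition geodesic_space :: "'x::metric_space itself \<Rightarrow> bool" where
  "geodesic_space _ \<longleftrightarrow> (\<forall>x y::'x. \<exists>\<gamma>::real \<Rightarrow> 'x. \<gamma> 0 = x \<and> \<gamma> (dist x y) = y \<and>
      (\<forall>s\<in>{0..dist x y}. \<forall>t\<in>{0..dist x y}. dist (\<gamma> s) (\<gamma> t) = \<bar>s - t\<bar>))"

definition hyperbolic :: "'x::metric_space itself \<Rightarrow> real \<Rightarrow> bool" where
  "hyperbolic _ \<delta> \<longleftrightarrow> (\<forall>x y z t::'x. gromov x z t \<ge> min (gromov x y t) (gromov y z t) - \<delta>)"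

definition isometric_action :: "('g, 'b) monoid_scheme \<Rightarrow> ('g \<Rightarrow> 'x::metric_space \<Rightarrow> 'x) \<Rightarrow> bool" where
  "isometric_action G act \<longleftrightarrow> group G \<and>
     (\<forall>x. act \<one>\<^bsub>G\<^esub> x = x) \<and>
     (\<forall>g\<in>carrier G. \<forall>h\<in>carrier G. \<forall>x. act (g \<otimes>\<^bsub>G\<^esub> h) x = act g (act h x)) \<and>
     (\<forall>g\<in>carrier G. \<forall>x y. dist (act g x) (act g y) = dist x y)"

text \<open>The letters U \<union> U^{-1} (U \<inter> U^{-1} = {} makes this a disjoint union embedded in G).\<close>
definition letters :: "('g, 'b) monoid_scheme \<Rightarrow> 'g set \<Rightarrow> 'g set" where
  "letters G U = U \<union> (\<lambda>u. inv\<^bsub>G\<^esub> u) ` U"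

definition alpha_reduced ::
  "('g, 'b) monoid_scheme \<Rightarrow> ('g \<Rightarrow> 'x::metric_space \<Rightarrow> 'x) \<Rightarrow> real \<Rightarrow> real \<Rightarrow> 'g set \<Rightarrow> 'x \<Rightarrow> bool" where
  "alpha_reduced G act \<delta> \<alpha> U p \<longleftrightarrow> U \<subseteq> carrier G \<and> finite U \<and>
     U \<inter> (\<lambda>u. inv\<^bsub>G\<^esub> u) ` U = {} \<and>
     (\<forall>u1\<in>letters G U. \<forall>u2\<in>letters G U. u1 \<noteq> u2 \<longrightarrow>
        gromov (act u1 p) (act u2 p) p
          < min (dist (act u1 p) p) (dist (act u2 p) p) / 2 - \<alpha> - 50 * \<delta>)"

text \<open>Reduced words of the free group F(U): lists of letters from U \<union> U^{-1}
  with no two consecutive mutually inverse letters.\<close>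
definition reduced_word :: "('g, 'b) monoid_scheme \<Rightarrow> 'g set \<Rightarrow> 'g list \<Rightarrow> bool" where
  "reduced_word G U w \<longleftrightarrow> set w \<subseteq> letters G U \<and>
     (\<forall>i. Suc i < length w \<longrightarrow> w ! Suc i \<noteq> inv\<^bsub>G\<^esub> (w ! i))"

definition word_eval :: "('g, 'b) monoid_scheme \<Rightarrow> 'g list \<Rightarrow> 'g" where
  "word_eval G w = foldr (\<lambda>a acc. a \<otimes>\<^bsub>G\<^esub> acc) w \<one>\<^bsub>G\<^esub>"

end

theory Submission
  imports Defs
begin

text \<open>A reduced word \<open>w = u\<^sub>1\<cdots>u\<^sub>m\<close> traces the path \<open>p, u\<^sub>1p, u\<^sub>1u\<^sub>2p, \<dots>, wp\<close>. By
  \<open>\<alpha>\<close>-reducedness, transported along the path by the isometries, its segments are long and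
  consecutive segments meet at a small Gromov product, so induction along the path with the
  hyperbolicity inequality gives \<open>(p, wp)\<^sub>q + \<delta> < |u\<^sub>mp - p|/2\<close> at the penultimate vertex
  \<open>q = w u\<^sub>m\<^sup>-\<^sup>1p\<close>. If \<open>w\<close> is not a prefix of \<open>w'\<close>, write \<open>w = cv\<close> and \<open>w' = cv'\<close> with \<open>v\<close>
  nonempty and \<open>v, v'\<close> not starting with the same letter. Then \<open>v'\<^sup>-\<^sup>1v\<close> is reduced, ends with
  \<open>u\<^sub>m\<close> and leads from \<open>w'p\<close> through \<open>q\<close> to \<open>wp\<close>, so likewise \<open>(w'p, wp)\<^sub>q + \<delta> < |u\<^sub>mp - p|/2\<close>.
  As \<open>|q - wp| = |u\<^sub>mp - p|\<close>, one more application of hyperbolicity at \<open>wp\<close> gives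
  \<open>(p, w'p)\<^sub>w\<^sub>p > |u\<^sub>mp - p|/2\<close>.\<close>

lemma gromov_commute: "gromov x y z = gromov y x z"
  unfolding gromov_def by (simp add: dist_commute)

lemma gromov_add_gromov_swap: "gromov x y z + gromov x z y = dist y z"
  unfolding gromov_def by (simp add: dist_commute field_simps)

lemma gromov_nonneg: "0 \<le> gromov x y z"
  unfolding gromov_def using dist_triangle[of x y z] by (simp add: dist_commute)

lemma gromov_at_left: "gromov x y x = 0"
  unfolding gromov_def by (simp add: dist_commute)

lemma hyperbolicD:
  fixes x y z t :: "'x::metric_space"
  shows "hyperbolic TYPE('x) \<delta> \<Longrightarrow> min (gromov x y t) (gromov y z t) - \<delta> \<le> gromov x z t"
  unfolding hyperbolic_def by blast

lemma hyperbolic_nonneg: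
  assumes "hyperbolic TYPE('x::metric_space) \<delta>"
  shows "0 \<le> \<delta>"
  using hyperbolicD[OF assms, of "undefined :: 'x" undefined undefined undefined] by simp

lemma hyperbolic_chain_gromov:
  fixes y :: "nat \<Rightarrow> 'x::metric_space"
  assumes hyp: "hyperbolic TYPE('x) \<delta>"
    and first: "2 * \<delta> < dist (y 0) (y 1)"
    and turn: "\<And>i. Suc i < n \<Longrightarrow> gromov (y i) (y (Suc (Suc i))) (y (Suc i)) + 2 * \<delta>
                  < min (dist (y i) (y (Suc i))) (dist (y (Suc i)) (y (Suc (Suc i)))) / 2"
    and "k < n"
  shows "gromov (y 0) (y (Suc k)) (y k) + \<delta> < dist (y k) (y (Suc k)) / 2"
  using \<open>k < n\<close>
proof (induction k)
  case 0
  then show ?case using first by (simp add: gromov_at_left)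
next
  case (Suc k)
  have IH: "gromov (y 0) (y (Suc k)) (y k) + \<delta> < dist (y k) (y (Suc k)) / 2"
    using Suc by simp
  have "gromov (y 0) (y (Suc k)) (y k) + gromov (y k) (y 0) (y (Suc k)) = dist (y k) (y (Suc k))"
    using gromov_add_gromov_swap[of "y 0" "y k" "y (Suc k)"] by (simp add: gromov_commute)
  with IH have far: "dist (y k) (y (Suc k)) / 2 + \<delta> < gromov (y k) (y 0) (y (Suc k))"
    by linarith
  have "min (gromov (y k) (y 0) (y (Suc k))) (gromov (y 0) (y (Suc (Suc k))) (y (Suc k))) - \<delta>
      \<le> gromov (y k) (y (Suc (Suc k))) (y (Suc k))"
    by (rule hyperbolicD[OF hyp])
  with far turn[OF Suc.prems] hyperbolic_nonneg[OF hyp] show ?case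
    by (simp add: min_def split: if_splits)
qed

lemma hyperbolic_gromov_gt_half:
  fixes x z P Q :: "'x::metric_space"
  assumes hyp: "hyperbolic TYPE('x) \<delta>"
    and "gromov x P Q + \<delta> < dist Q P / 2" and "gromov z P Q + \<delta> < dist Q P / 2"
  shows "dist Q P / 2 < gromov x z P"
proof -
  have "gromov x P Q + gromov x Q P = dist Q P" "gromov z P Q + gromov z Q P = dist Q P"
    using gromov_add_gromov_swap by (simp_all add: dist_commute)
  moreover have "min (gromov x Q P) (gromov Q z P) - \<delta> \<le> gromov x z P"
    by (rule hyperbolicD[OF hyp])
  ultimately show ?thesis
    using assms(2,3) by (simp add: gromov_commute[of Q z])
qed

context group
begin

lemma word_eval_Nil [simp]: "word_eval G [] = \<one>"
  by (simp add: word_eval_def)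

lemma word_eval_Cons [simp]: "word_eval G (a # w) = a \<otimes> word_eval G w"
  by (simp add: word_eval_def)

lemma word_eval_closed: "set w \<subseteq> carrier G \<Longrightarrow> word_eval G w \<in> carrier G"
  by (induction w) auto

lemma word_eval_append:
  "set v \<subseteq> carrier G \<Longrightarrow> set w \<subseteq> carrier G \<Longrightarrow>
    word_eval G (v @ w) = word_eval G v \<otimes> word_eval G w"
  by (induction v) (auto simp: word_eval_closed m_assoc)

lemma word_eval_take_Suc:
  assumes "set w \<subseteq> carrier G" and "i < length w"
  shows "word_eval G (take (Suc i) w) = word_eval G (take i w) \<otimes> w ! i"
proof -
  have "set (take i w) \<subseteq> carrier G" "w ! i \<in> carrier G"
    using assms by (auto dest: in_set_takeD)
  then show ?thesis
    using assms(2) by (simp add: take_Suc_conv_app_nth word_eval_append)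
qed

lemma word_eval_rev_map_inv:
  "set w \<subseteq> carrier G \<Longrightarrow> word_eval G (rev (map (\<lambda>u. inv u) w)) = inv (word_eval G w)"
proof (induction w)
  case (Cons a w)
  then have "set (rev (map (\<lambda>u. inv u) w)) \<subseteq> carrier G"
    by auto
  with Cons show ?case
    by (simp add: word_eval_append word_eval_closed inv_mult_group)
qed simp

lemma word_eval_cancel_inverse:
  assumes "set c \<subseteq> carrier G" "set v \<subseteq> carrier G" "set v' \<subseteq> carrier G"
  shows "word_eval G (c @ v') \<otimes> word_eval G (rev (map (\<lambda>u. inv u) v') @ v) = word_eval G (c @ v)"
proof -
  have "set (rev (map (\<lambda>u. inv u) v')) \<subseteq> carrier G"
    using assms(3) by auto
  with assms have "word_eval G (c @ v') \<otimes> word_eval G (rev (map (\<lambda>u. inv u) v') @ v)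
      = word_eval G c \<otimes> (word_eval G v' \<otimes> (inv (word_eval G v') \<otimes> word_eval G v))"
    by (simp add: word_eval_append word_eval_rev_map_inv word_eval_closed m_assoc)
  also have "\<dots> = word_eval G c \<otimes> word_eval G v"
    using assms by (simp add: word_eval_closed m_assoc[of "word_eval G v'", symmetric])
  finally show ?thesis
    using assms by (simp add: word_eval_append)
qed

lemma letters_closed: "U \<subseteq> carrier G \<Longrightarrow> letters G U \<subseteq> carrier G"
  unfolding letters_def by auto

lemma inv_in_letters: "U \<subseteq> carrier G \<Longrightarrow> u \<in> letters G U \<Longrightarrow> inv u \<in> letters G U"
  unfolding letters_def by (auto simp: subset_iff)

lemma inv_letter_neq:
  assumes "U \<subseteq> carrier G" and "U \<inter> (\<lambda>u. inv u) ` U = {}" and "u \<in> letters G U"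
  shows "inv u \<noteq> u"
  using assms unfolding letters_def by (auto simp: subset_iff) (metis IntI empty_iff image_eqI)+

lemma reduced_word_iff:
  "reduced_word G U w \<longleftrightarrow> set w \<subseteq> letters G U \<and> successively (\<lambda>a b. b \<noteq> inv a) w"
  unfolding reduced_word_def successively_conv_nth by blast

lemma reduced_word_appendD: "reduced_word G U (v @ w) \<Longrightarrow> reduced_word G U w"
  by (simp add: reduced_word_iff successively_append_iff)

lemma reduced_word_inverse_append:
  assumes U: "U \<subseteq> carrier G" and v: "reduced_word G U v" and v': "reduced_word G U v'"
    and diverge: "v' = [] \<or> hd v \<noteq> hd v'"
  shows "reduced_word G U (rev (map (\<lambda>u. inv u) v') @ v)"
proof -
  have v'_closed: "set v' \<subseteq> carrier G"
    using v' letters_closed[OF U] by (auto simp: reduced_word_iff)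
  have "successively (\<lambda>a b. b \<noteq> inv a) (rev (map (\<lambda>u. inv u) v'))"
    using v' v'_closed by (auto simp: reduced_word_iff successively_map subset_iff
        elim!: successively_mono)
  moreover have "v' = [] \<or> hd v \<noteq> inv (inv (hd v'))"
    using diverge v'_closed by (auto simp: neq_Nil_conv)
  ultimately show ?thesis
    using v v' inv_in_letters[OF U]
    by (auto simp: reduced_word_iff successively_append_iff last_rev hd_map)
qed

end

definition word_path ::
  "('g, 'b) monoid_scheme \<Rightarrow> ('g \<Rightarrow> 'x \<Rightarrow> 'x) \<Rightarrow> 'g \<Rightarrow> 'g list \<Rightarrow> 'x \<Rightarrow> nat \<Rightarrow> 'x" where
  "word_path G act h w p i = act (h \<otimes>\<^bsub>G\<^esub> word_eval G (take i w)) p"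

locale isometric_group_action =
  fixes G :: "('g, 'b) monoid_scheme" (structure) and act :: "'g \<Rightarrow> 'x::metric_space \<Rightarrow> 'x"
  assumes isometric: "isometric_action G act"
begin

sublocale group G
  using isometric unfolding isometric_action_def by blast

lemma act_one [simp]: "act \<one> x = x"
  using isometric unfolding isometric_action_def by blast

lemma act_mult: "g \<in> carrier G \<Longrightarrow> h \<in> carrier G \<Longrightarrow> act (g \<otimes> h) x = act g (act h x)"
  using isometric unfolding isometric_action_def by blast

lemma dist_act: "g \<in> carrier G \<Longrightarrow> dist (act g x) (act g y) = dist x y"
  using isometric unfolding isometric_action_def by blast

lemma gromov_act: "g \<in> carrier G \<Longrightarrow> gromov (act g x) (act g y) (act g z) = gromov x y z"
  unfolding gromov_def by (simp add: dist_act)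

lemma dist_act_mult_inv:
  assumes "g \<in> carrier G" and "u \<in> carrier G"
  shows "dist (act (g \<otimes> inv u) p) (act g p) = dist (act u p) p"
proof -
  have "act g p = act (g \<otimes> inv u) (act u p)"
    using assms by (simp flip: act_mult add: m_assoc)
  then show ?thesis
    using assms by (simp add: dist_act dist_commute)
qed

lemma letter_displacement_gt:
  assumes red: "alpha_reduced G act \<delta> \<alpha> U p" and u: "u \<in> letters G U"
  shows "\<alpha> + 50 * \<delta> < dist (act u p) p / 2"
proof -
  have U: "U \<subseteq> carrier G" "U \<inter> (\<lambda>u. inv u) ` U = {}"
    using red unfolding alpha_reduced_def by auto
  then have "u \<in> carrier G"
    using u letters_closed by blast
  then have "dist (act (inv u) p) p = dist (act u p) p"
    using dist_act_mult_inv[of \<one> u p] by simp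
  moreover have "gromov (act u p) (act (inv u) p) p
      < min (dist (act u p) p) (dist (act (inv u) p) p) / 2 - \<alpha> - 50 * \<delta>"
    using red u inv_in_letters[OF U(1) u] inv_letter_neq[OF U u]
    unfolding alpha_reduced_def by metis
  ultimately show ?thesis
    using gromov_nonneg[of "act u p" "act (inv u) p" p] by simp
qed

lemma alpha_reduced_gromov_act:
  assumes red: "alpha_reduced G act \<delta> \<alpha> U p" and g: "g \<in> carrier G"
    and "u \<in> letters G U" "u' \<in> letters G U" "u \<noteq> u'"
  shows "gromov (act g (act u p)) (act g (act u' p)) (act g p)
    < min (dist (act g (act u p)) (act g p)) (dist (act g (act u' p)) (act g p)) / 2 - \<alpha> - 50 * \<delta>"
  using assms unfolding alpha_reduced_def by (simp add: gromov_act dist_act)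

lemma word_path_Suc:
  assumes w: "set w \<subseteq> carrier G" and h: "h \<in> carrier G" and i: "i < length w"
  shows "word_path G act h w p (Suc i) = act (h \<otimes> word_eval G (take i w)) (act (w ! i) p)"
    and "word_path G act h w p i = act (h \<otimes> word_eval G (take (Suc i) w)) (act (inv (w ! i)) p)"
proof -
  have closed: "word_eval G (take i w) \<in> carrier G" "w ! i \<in> carrier G"
    using w i by (auto intro!: word_eval_closed dest: in_set_takeD)
  have step: "h \<otimes> word_eval G (take (Suc i) w) = h \<otimes> word_eval G (take i w) \<otimes> w ! i"
    using w h i closed by (simp add: word_eval_take_Suc m_assoc)
  then show "word_path G act h w p (Suc i) = act (h \<otimes> word_eval G (take i w)) (act (w ! i) p)"
    using h closed by (simp add: word_path_def act_mult)
  from step have "h \<otimes> word_eval G (take i w) = h \<otimes> word_eval G (take (Suc i) w) \<otimes> inv (w ! i)"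
    using h closed by (simp add: m_assoc)
  also have "act \<dots> p = act (h \<otimes> word_eval G (take (Suc i) w)) (act (inv (w ! i)) p)"
    using h closed step by (simp add: act_mult)
  finally show "word_path G act h w p i
      = act (h \<otimes> word_eval G (take (Suc i) w)) (act (inv (w ! i)) p)"
    by (simp add: word_path_def)
qed

lemma word_path_segment:
  assumes "set w \<subseteq> carrier G" and "h \<in> carrier G" and "i < length w"
  shows "dist (word_path G act h w p i) (word_path G act h w p (Suc i)) = dist (act (w ! i) p) p"
proof -
  have "h \<otimes> word_eval G (take i w) \<in> carrier G"
    using assms by (meson m_closed set_take_subset subset_trans word_eval_closed)
  then show ?thesis
    using word_path_Suc(1)[OF assms] by (simp add: word_path_def dist_act dist_commute)
qed

lemma word_path_turn:
  assumes red: "alpha_reduced G act \<delta> \<alpha> U p" and w: "reduced_word G U w"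
    and h: "h \<in> carrier G" and i: "Suc i < length w"
  shows "gromov (word_path G act h w p i) (word_path G act h w p (Suc (Suc i))) (word_path G act h w p (Suc i))
    < min (dist (word_path G act h w p i) (word_path G act h w p (Suc i)))
          (dist (word_path G act h w p (Suc i)) (word_path G act h w p (Suc (Suc i)))) / 2
      - \<alpha> - 50 * \<delta>"
proof -
  have U: "U \<subseteq> carrier G"
    using red unfolding alpha_reduced_def by auto
  have letters: "w ! i \<in> letters G U" "w ! Suc i \<in> letters G U"
    using w i nth_mem[of i w] nth_mem[of "Suc i" w] by (auto simp: reduced_word_iff)
  have w_closed: "set w \<subseteq> carrier G"
    using w letters_closed[OF U] by (auto simp: reduced_word_iff)
  have "h \<otimes> word_eval G (take (Suc i) w) \<in> carrier G"
    using h w_closed by (meson m_closed set_take_subset subset_trans word_eval_closed)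
  moreover have "inv (w ! i) \<noteq> w ! Suc i"
    using w i by (auto simp: reduced_word_iff dest: successively_nth)
  ultimately show ?thesis
    using alpha_reduced_gromov_act[OF red _ inv_in_letters[OF U letters(1)] letters(2)]
      word_path_Suc(2)[OF w_closed h, of i] word_path_Suc(1)[OF w_closed h, of "Suc i"] i
    by (simp add: word_path_def dist_commute)
qed

lemma reduced_word_gromov_last:
  assumes hyp: "hyperbolic TYPE('x) \<delta>" and "0 \<le> \<alpha>"
    and red: "alpha_reduced G act \<delta> \<alpha> U p"
    and w: "reduced_word G U w" "w \<noteq> []" and h: "h \<in> carrier G"
  shows "gromov (act h p) (act (h \<otimes> word_eval G w) p) (act (h \<otimes> word_eval G w \<otimes> inv (last w)) p)
      + \<delta> < dist (act (last w) p) p / 2"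
proof -
  define n where "n = length w"
  let ?y = "word_path G act h w p"
  have U: "U \<subseteq> carrier G"
    using red unfolding alpha_reduced_def by auto
  have w_closed: "set w \<subseteq> carrier G"
    using w(1) letters_closed[OF U] by (auto simp: reduced_word_iff)
  have "0 \<le> \<delta>"
    using hyperbolic_nonneg[OF hyp] .
  have n: "0 < n"
    using w(2) by (simp add: n_def)
  have "w ! 0 \<in> letters G U"
    using w n by (auto simp: reduced_word_iff n_def)
  then have first: "2 * \<delta> < dist (?y 0) (?y 1)"
    using word_path_segment[OF w_closed h, of 0] letter_displacement_gt[OF red] n
      \<open>0 \<le> \<alpha>\<close> \<open>0 \<le> \<delta>\<close> by (fastforce simp: n_def)
  have turn: "gromov (?y i) (?y (Suc (Suc i))) (?y (Suc i)) + 2 * \<delta>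
      < min (dist (?y i) (?y (Suc i))) (dist (?y (Suc i)) (?y (Suc (Suc i)))) / 2" if "Suc i < n" for i
    using word_path_turn[OF red w(1) h, of i] that \<open>0 \<le> \<alpha>\<close> \<open>0 \<le> \<delta>\<close>
    by (auto simp: n_def min_def split: if_split_asm)
  have "gromov (?y 0) (?y (Suc (n - 1))) (?y (n - 1)) + \<delta> < dist (?y (n - 1)) (?y (Suc (n - 1))) / 2"
    using hyperbolic_chain_gromov[where n = n and k = "n - 1", OF hyp first turn] n by simp
  moreover have "last w = w ! (n - 1)"
    using w(2) by (simp add: n_def last_conv_nth)
  moreover have "word_eval G w \<in> carrier G" "inv (last w) \<in> carrier G"
    using w_closed last_in_set[OF w(2)] by (auto simp: word_eval_closed)
  ultimately show ?thesis
    using n word_path_segment[OF w_closed h, of "n - 1"] word_path_Suc(2)[OF w_closed h, of "n - 1"] h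
    by (simp add: word_path_def n_def act_mult)
qed

lemma not_prefix_gromov_last:
  assumes hyp: "hyperbolic TYPE('x) \<delta>" and "0 \<le> \<alpha>"
    and red: "alpha_reduced G act \<delta> \<alpha> U p"
    and w: "reduced_word G U w" and w': "reduced_word G U w'" and "\<not> prefix w w'"
  shows "gromov (act (word_eval G w') p) (act (word_eval G w) p) (act (word_eval G w \<otimes> inv (last w)) p)
      + \<delta> < dist (act (last w) p) p / 2"
proof -
  obtain c v v' where split_w: "w = c @ v" and split_w': "w' = c @ v'" and "v \<noteq> []"
    and diverge: "v' = [] \<or> hd v \<noteq> hd v'"
    using longest_common_prefix[of w w'] \<open>\<not> prefix w w'\<close> by (metis append.right_neutral prefixI)
  define u where "u = rev (map (\<lambda>a. inv a) v') @ v"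
  have U: "U \<subseteq> carrier G"
    using red unfolding alpha_reduced_def by auto
  have closed: "set c \<subseteq> carrier G" "set v \<subseteq> carrier G" "set v' \<subseteq> carrier G"
    using w w' letters_closed[OF U] by (auto simp: reduced_word_iff split_w split_w')
  have u: "reduced_word G U u"
    unfolding u_def using w w' split_w split_w'
    by (blast intro: reduced_word_inverse_append[OF U _ _ diverge] reduced_word_appendD)
  have "u \<noteq> []" and last_u: "last u = last w"
    using \<open>v \<noteq> []\<close> by (simp_all add: u_def split_w)
  have eval_u: "word_eval G w' \<otimes> word_eval G u = word_eval G w"
    using closed by (simp add: split_w split_w' u_def word_eval_cancel_inverse)
  have "word_eval G w' \<in> carrier G"
    using closed by (simp add: split_w' word_eval_closed)
  from reduced_word_gromov_last[OF hyp \<open>0 \<le> \<alpha>\<close> red u \<open>u \<noteq> []\<close> this] show ?thesis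
    unfolding eval_u last_u .
qed

end

theorem mainTheorem11:
  fixes G :: "('g, 'b) monoid_scheme"
    and act :: "'g \<Rightarrow> 'x::metric_space \<Rightarrow> 'x"
    and \<delta> \<alpha> :: real and U :: "'g set" and p :: 'x
    and w w' :: "'g list"
  assumes "isometric_action G act"
    and "geodesic_space TYPE('x)"
    and "hyperbolic TYPE('x) \<delta>"
    and "\<alpha> \<ge> 3 * \<delta>"
    and "alpha_reduced G act \<delta> \<alpha> U p"
    and "reduced_word G U w" and "reduced_word G U w'"
    and "w \<noteq> []"
    and "gromov p (act (word_eval G w') p) (act (word_eval G w) p) \<le> dist (act (last w) p) p / 2"
  shows "prefix w w'"
proof (rule ccontr)
  assume "\<not> prefix w w'"
  interpret isometric_group_action G act
    by (rule isometric_group_action.intro) (fact assms(1))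
  have "0 \<le> \<alpha>"
    using assms(4) hyperbolic_nonneg[OF assms(3)] by linarith
  have U: "U \<subseteq> carrier G"
    using assms(5) unfolding alpha_reduced_def by auto
  have w_closed: "word_eval G w \<in> carrier G" and "last w \<in> carrier G"
    using assms(6) last_in_set[OF assms(8)] letters_closed[OF U]
    by (auto simp: reduced_word_iff word_eval_closed)
  then have "dist (act (word_eval G w \<otimes>\<^bsub>G\<^esub> inv\<^bsub>G\<^esub> (last w)) p) (act (word_eval G w) p)
      = dist (act (last w) p) p"
    by (rule dist_act_mult_inv)
  moreover have "gromov p (act (word_eval G w) p) (act (word_eval G w \<otimes>\<^bsub>G\<^esub> inv\<^bsub>G\<^esub> (last w)) p) + \<delta>
      < dist (act (last w) p) p / 2"
    using reduced_word_gromov_last[OF assms(3) \<open>0 \<le> \<alpha>\<close> assms(5,6,8) one_closed] w_closed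
    by simp
  moreover have "gromov (act (word_eval G w') p) (act (word_eval G w) p)
      (act (word_eval G w \<otimes>\<^bsub>G\<^esub> inv\<^bsub>G\<^esub> (last w)) p) + \<delta> < dist (act (last w) p) p / 2"
    using not_prefix_gromov_last[OF assms(3) \<open>0 \<le> \<alpha>\<close> assms(5,6,7) \<open>\<not> prefix w w'\<close>] .
  ultimately have "dist (act (last w) p) p / 2 < gromov p (act (word_eval G w') p) (act (word_eval G w) p)"
    using hyperbolic_gromov_gt_half[OF assms(3)] by metis
  with assms(9) show False
    by simp
qed

end
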